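(* Let $q$ be a prime power and let $n,k$ be integers with $3\le k\le n-2\le q-2$. Let $\Lambda=\{\alpha_1,\dots,\alpha_n\}\subseteq\mathbb{F}_q$ with the $\alpha_i$ pairwise distinct, and let $C_{k-1,k-2}$ be the linear code generated by the $k\times n$ matrix whose rows are $(\alpha_1^{e},\dots,\alpha_n^{e})$ for $e=0,1,\dots,k-3,k,k+1$. Then $C_{k-1,k-2}$ is MDS if and only if $$S_2(\beta_1,\dots,\beta_k)^2-S_1(\beta_1,\dots,\beta_k)S_3(\beta_1,\dots,\beta_k)\neq 0$$ for every $k$-element subset $\{\beta_1,\dots,\beta_k\}\subseteq\Lambda$ (with the $\beta_i$ distinct).
   Context: Convention: $0^0=1$. $S_t(x_1,\dots,x_m)=\sum_{t_1+\dots+t_m=t,\ t_i\ge0}x_1^{t_1}\cdots x_m^{t_m}$ is the complete homogeneous symmetric polynomial of degree $t$. An $[n,k,d]$ linear code is MDS if $d=n-k+1$. *)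

theory Defs
  imports Main
begin

text \<open>Note 0^0 = 1 in Isabelle, matching the paper's convention.\<close>
definition complete_hom :: "nat \<Rightarrow> nat \<Rightarrow> (nat \<Rightarrow> 'a::comm_semiring_1) \<Rightarrow> 'a" where
  "complete_hom t m x =
     (\<Sum>e\<in>{e::nat\<Rightarrow>nat. (\<forall>i\<ge>m. e i = 0) \<and> (\<Sum>i<m. e i) = t}. \<Prod>i<m. x i ^ e i)"

text \<open>Vectors of length n are functions nat => 'a that vanish outside {0..<n}.\<close>
definition gen_code :: "nat \<Rightarrow> nat \<Rightarrow> (nat \<Rightarrow> nat \<Rightarrow> 'a::field) \<Rightarrow> (nat \<Rightarrow> 'a) set" where
  "gen_code k n G = {(\<lambda>j. if j < n then (\<Sum>i<k. c i * G i j) else 0) | c. True}"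

definition hweight :: "nat \<Rightarrow> (nat \<Rightarrow> 'a::zero) \<Rightarrow> nat" where
  "hweight n v = card {j. j < n \<and> v j \<noteq> 0}"

definition min_dist :: "nat \<Rightarrow> (nat \<Rightarrow> 'a::zero) set \<Rightarrow> nat" where
  "min_dist n C = Min {hweight n v | v. v \<in> C \<and> v \<noteq> (\<lambda>_. 0)}"

definition is_MDS :: "nat \<Rightarrow> (nat \<Rightarrow> 'a::{finite,field}) set \<Rightarrow> bool" where
  "is_MDS n C \<longleftrightarrow> (\<exists>k. card C = card (UNIV :: 'a set) ^ k \<and> (\<exists>v\<in>C. v \<noteq> (\<lambda>_. 0)) \<and>
                        min_dist n C + k = n + 1)"

definition row_exp :: "nat \<Rightarrow> nat \<Rightarrow> nat" where
  "row_exp k i = (if i \<le> k - 3 then i else i + 2)"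

definition code_C :: "nat \<Rightarrow> nat \<Rightarrow> (nat \<Rightarrow> 'a::field) \<Rightarrow> (nat \<Rightarrow> 'a) set" where
  "code_C k n \<alpha> = gen_code k n (\<lambda>i j. \<alpha> j ^ row_exp k i)"

end

theory Submission
  imports Defs "HOL-Computational_Algebra.Polynomial" "HOL-Library.FuncSet"
begin

(* A codeword of C_{k-1,k-2} is the evaluation vector on \<Lambda> of a polynomial f of degree at most
   k + 1 whose coefficients of x^(k-2) and x^(k-1) vanish; as n > k + 1 the code has dimension k.
   By the Singleton bound the code is MDS iff no nonzero such f vanishes at k distinct points
   \<beta>_1, ..., \<beta>_k of \<Lambda>. Such an f is (b + a x) P with P = (x - \<beta>_1) ... (x - \<beta>_k), and the two
   vanishing coefficients form a homogeneous linear system in (a, b) whose determinant is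
   e_2^2 - e_1 e_3 for the elementary symmetric polynomials e_j of the \<beta>_i; via the relations
   between the e_j and the S_j this equals S_2^2 - S_1 S_3. *)

definition exponent_vectors :: "nat \<Rightarrow> nat \<Rightarrow> (nat \<Rightarrow> nat) set" where
  "exponent_vectors t m = {e. (\<forall>i\<ge>m. e i = 0) \<and> (\<Sum>i<m. e i) = t}"

lemma finite_exponent_vectors: "finite (exponent_vectors t m)"
proof (rule finite_subset)
  show "exponent_vectors t m \<subseteq> {e. \<forall>i. (i \<in> {..<m} \<longrightarrow> e i \<in> {..t}) \<and> (i \<notin> {..<m} \<longrightarrow> e i = 0)}"
    by (auto simp: exponent_vectors_def intro: order.trans[OF member_le_sum])
qed (intro finite_set_of_finite_funs; simp)

lemma complete_hom_Suc:
  "complete_hom t (Suc m) x = (\<Sum>s\<le>t. complete_hom (t - s) m x * x m ^ s)"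
proof -
  have "(\<Sum>s\<le>t. complete_hom (t - s) m x * x m ^ s)
      = (\<Sum>(s, e)\<in>Sigma {..t} (\<lambda>s. exponent_vectors (t - s) m). (\<Prod>i<m. x i ^ e i) * x m ^ s)"
    by (simp add: complete_hom_def exponent_vectors_def[symmetric] sum_distrib_right
        sum.Sigma finite_exponent_vectors)
  also have "\<dots> = (\<Sum>e\<in>exponent_vectors t (Suc m). \<Prod>i<Suc m. x i ^ e i)"
  proof (rule sum.reindex_bij_witness
      [where i = "\<lambda>e. (e m, e(m := 0))" and j = "\<lambda>(s, e). e(m := s)"])
    fix p assume p: "p \<in> Sigma {..t} (\<lambda>s. exponent_vectors (t - s) m)"
    obtain s e where se: "p = (s, e)" by (cases p)
    have "(\<Sum>i<m. (e(m := s)) i) = (\<Sum>i<m. e i)" "(\<Prod>i<m. x i ^ (e(m := s)) i) = (\<Prod>i<m. x i ^ e i)"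
      by (auto intro!: sum.cong prod.cong)
    then show "(case p of (s, e) \<Rightarrow> e(m := s)) \<in> exponent_vectors t (Suc m)"
      "((case p of (s, e) \<Rightarrow> e(m := s)) m, (case p of (s, e) \<Rightarrow> e(m := s))(m := 0)) = p"
      "(\<Prod>i<Suc m. x i ^ (case p of (s, e) \<Rightarrow> e(m := s)) i) =
         (case p of (s, e) \<Rightarrow> (\<Prod>i<m. x i ^ e i) * x m ^ s)"
      using p by (auto simp: se exponent_vectors_def fun_eq_iff)
  qed (auto simp: exponent_vectors_def)
  finally show ?thesis by (simp add: complete_hom_def exponent_vectors_def)
qed

lemma complete_hom_no_vars: "complete_hom t 0 x = (if t = 0 then 1 else 0)"
proof -
  have "exponent_vectors t 0 = (if t = 0 then {\<lambda>_. 0} else {})"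
    by (auto simp: exponent_vectors_def)
  then show ?thesis
    unfolding complete_hom_def exponent_vectors_def[symmetric] by simp
qed

lemma complete_hom_degree_0: "complete_hom 0 m x = 1"
  by (induction m) (simp_all add: complete_hom_no_vars complete_hom_Suc)

lemma complete_hom_1_Suc: "complete_hom 1 (Suc m) x = complete_hom 1 m x + x m"
  by (simp add: complete_hom_Suc complete_hom_degree_0)

lemma complete_hom_2_Suc:
  "complete_hom 2 (Suc m) x = complete_hom 2 m x + complete_hom 1 m x * x m + x m ^ 2"
  by (simp add: complete_hom_Suc complete_hom_degree_0 numeral_2_eq_2 atMost_Suc algebra_simps
      power2_eq_square)

lemma complete_hom_3_Suc:
  "complete_hom 3 (Suc m) x =
     complete_hom 3 m x + complete_hom 2 m x * x m + complete_hom 1 m x * x m ^ 2 + x m ^ 3"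
  by (simp add: complete_hom_Suc complete_hom_degree_0 numeral_3_eq_3 numeral_2_eq_2 atMost_Suc
      algebra_simps)

definition root_poly :: "nat \<Rightarrow> (nat \<Rightarrow> 'a::comm_ring_1) \<Rightarrow> 'a poly" where
  "root_poly m x = (\<Prod>i<m. [:- x i, 1:])"

definition rev_root_poly :: "nat \<Rightarrow> (nat \<Rightarrow> 'a::comm_ring_1) \<Rightarrow> 'a poly" where
  "rev_root_poly m x = (\<Prod>i<m. [:1, - x i:])"

lemma coeff_mult_linear_Suc:
  "coeff (p * [:b, a:]) (Suc j) = b * coeff p (Suc j) + a * coeff p j"
  for p :: "'a::comm_ring_1 poly"
  by (simp add: mult_pCons_right)

lemma coeff_rev_root_poly_Suc:
  "coeff (rev_root_poly (Suc m) x) (Suc j) =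
     coeff (rev_root_poly m x) (Suc j) - x m * coeff (rev_root_poly m x) j"
  by (simp add: rev_root_poly_def coeff_mult_linear_Suc)

lemma coeff_rev_root_poly_0: "coeff (rev_root_poly m x) 0 = 1"
  by (induction m) (simp_all add: rev_root_poly_def mult_pCons_right)

lemma coeff_rev_root_poly_1: "coeff (rev_root_poly m x) 1 = - complete_hom 1 m x"
proof (induction m)
  case (Suc m)
  have "coeff (rev_root_poly (Suc m) x) 1 =
          coeff (rev_root_poly m x) 1 - x m * coeff (rev_root_poly m x) 0"
    using coeff_rev_root_poly_Suc[of m x 0] by simp
  then show ?case
    unfolding complete_hom_1_Suc Suc.IH coeff_rev_root_poly_0 by simp
qed (simp add: rev_root_poly_def complete_hom_no_vars)

lemma coeff_rev_root_poly_2: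
  "coeff (rev_root_poly m x) 2 = complete_hom 1 m x ^ 2 - complete_hom 2 m x"
proof (induction m)
  case (Suc m)
  have "coeff (rev_root_poly (Suc m) x) 2 =
          coeff (rev_root_poly m x) 2 - x m * coeff (rev_root_poly m x) 1"
    using coeff_rev_root_poly_Suc[of m x 1] by (simp add: numeral_2_eq_2)
  then show ?case
    unfolding complete_hom_1_Suc complete_hom_2_Suc Suc.IH coeff_rev_root_poly_1
    by (simp add: algebra_simps power2_eq_square)
qed (simp add: rev_root_poly_def complete_hom_no_vars)

lemma coeff_rev_root_poly_3:
  "coeff (rev_root_poly m x) 3 =
     2 * complete_hom 1 m x * complete_hom 2 m x - complete_hom 1 m x ^ 3 - complete_hom 3 m x"
proof (induction m)
  case (Suc m)
  have "coeff (rev_root_poly (Suc m) x) 3 =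
          coeff (rev_root_poly m x) 3 - x m * coeff (rev_root_poly m x) 2"
    using coeff_rev_root_poly_Suc[of m x 2] by (simp add: numeral_3_eq_3)
  then show ?case
    unfolding complete_hom_1_Suc complete_hom_2_Suc complete_hom_3_Suc Suc.IH coeff_rev_root_poly_2
    by (simp add: algebra_simps power2_eq_square power3_eq_cube)
qed (simp add: rev_root_poly_def complete_hom_no_vars)

lemma rev_root_poly_hankel_det:
  "coeff (rev_root_poly m x) 2 ^ 2 - coeff (rev_root_poly m x) 1 * coeff (rev_root_poly m x) 3
     = complete_hom 2 m x ^ 2 - complete_hom 1 m x * complete_hom 3 m x"
  unfolding coeff_rev_root_poly_1 coeff_rev_root_poly_2 coeff_rev_root_poly_3
  by (simp add: algebra_simps power2_eq_square power3_eq_cube)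

lemma degree_root_poly: "degree (root_poly m x) = m" for x :: "nat \<Rightarrow> 'a::idom"
  unfolding root_poly_def by (subst degree_prod_sum_eq) auto

lemma root_poly_nonzero: "root_poly m x \<noteq> 0" for x :: "nat \<Rightarrow> 'a::idom"
  unfolding root_poly_def by auto

lemma poly_root_poly_root: "i < m \<Longrightarrow> poly (root_poly m x) (x i) = 0" for x :: "nat \<Rightarrow> 'a::idom"
  unfolding root_poly_def by (auto simp: poly_prod)

lemma reflect_root_poly: "reflect_poly (root_poly m x) = rev_root_poly m x"
  for x :: "nat \<Rightarrow> 'a::idom"
proof -
  have "reflect_poly [:- a, 1:] = [:1, - a:]" for a :: 'a
    by (rule poly_eqI) (auto simp: coeff_reflect_poly coeff_pCons split: nat.splits)
  then show ?thesis
    unfolding root_poly_def rev_root_poly_def by (simp add: reflect_poly_prod)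
qed

lemma coeff_root_poly:
  "j \<le> m \<Longrightarrow> coeff (root_poly m x) (m - j) = coeff (rev_root_poly m x) j" for x :: "nat \<Rightarrow> 'a::idom"
  by (simp add: reflect_root_poly[symmetric] coeff_reflect_poly degree_root_poly)

lemma root_poly_dvd_iff:
  fixes \<beta> :: "nat \<Rightarrow> 'a::field"
  assumes "inj_on \<beta> {..<k}"
  shows "root_poly k \<beta> dvd f \<longleftrightarrow> (\<forall>i<k. poly f (\<beta> i) = 0)"
proof
  show "root_poly k \<beta> dvd f \<Longrightarrow> \<forall>i<k. poly f (\<beta> i) = 0"
    by (auto simp: poly_root_poly_root elim!: dvdE)
next
  assume roots: "\<forall>i<k. poly f (\<beta> i) = 0"
  let ?r = "f mod root_poly k \<beta>"
  have "?r = 0"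
  proof (rule ccontr)
    assume nz: "?r \<noteq> 0"
    have "degree ?r < card (\<beta> ` {..<k})"
      using degree_mod_less'[OF root_poly_nonzero nz] assms
      by (simp add: card_image degree_root_poly)
    moreover have "poly ?r x = poly 0 x" if "x \<in> \<beta> ` {..<k}" for x
      using roots that by (auto simp: poly_mod poly_root_poly_root)
    ultimately have "?r = 0"
      by (intro poly_eqI_degree[of "\<beta> ` {..<k}"]) auto
    with nz show False ..
  qed
  then show "root_poly k \<beta> dvd f"
    by (simp add: mod_eq_0_iff_dvd)
qed

lemma coeff_root_poly_mult_linear:
  fixes x :: "nat \<Rightarrow> 'a::idom"
  assumes "3 \<le> m"
  shows "coeff (root_poly m x * [:b, a:]) (m - 1) =
           b * coeff (rev_root_poly m x) 1 + a * coeff (rev_root_poly m x) 2"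
    and "coeff (root_poly m x * [:b, a:]) (m - 2) =
           b * coeff (rev_root_poly m x) 2 + a * coeff (rev_root_poly m x) 3"
proof -
  have shift: "m - 1 = Suc (m - 2)" "m - 2 = Suc (m - 3)"
    using assms by auto
  have "coeff (root_poly m x) (m - j) = coeff (rev_root_poly m x) j" if "j \<le> 3" for j
    using assms that by (intro coeff_root_poly) auto
  from this[of 1] this[of 2] this[of 3]
  show "coeff (root_poly m x * [:b, a:]) (m - 1) =
          b * coeff (rev_root_poly m x) 1 + a * coeff (rev_root_poly m x) 2"
    and "coeff (root_poly m x * [:b, a:]) (m - 2) =
          b * coeff (rev_root_poly m x) 2 + a * coeff (rev_root_poly m x) 3"
    unfolding shift coeff_mult_linear_Suc unfolding shift[symmetric] by simp_all
qed

lemma ex_nonzero_kernel_2x2_iff: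
  fixes c1 c2 c3 :: "'a::field"
  shows "(\<exists>a b. (a \<noteq> 0 \<or> b \<noteq> 0) \<and> b * c1 + a * c2 = 0 \<and> b * c2 + a * c3 = 0) \<longleftrightarrow>
           c2 ^ 2 - c1 * c3 = 0"
proof
  assume "\<exists>a b. (a \<noteq> 0 \<or> b \<noteq> 0) \<and> b * c1 + a * c2 = 0 \<and> b * c2 + a * c3 = 0"
  then obtain a b where "a \<noteq> 0 \<or> b \<noteq> 0" "b * c1 + a * c2 = 0" "b * c2 + a * c3 = 0"
    by blast
  moreover have "b * (c2 ^ 2 - c1 * c3) = c2 * (b * c2 + a * c3) - c3 * (b * c1 + a * c2)"
    "a * (c2 ^ 2 - c1 * c3) = c2 * (b * c1 + a * c2) - c1 * (b * c2 + a * c3)"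
    by (simp_all add: algebra_simps power2_eq_square)
  ultimately show "c2 ^ 2 - c1 * c3 = 0"
    by auto
next
  assume det: "c2 ^ 2 - c1 * c3 = 0"
  show "\<exists>a b. (a \<noteq> 0 \<or> b \<noteq> 0) \<and> b * c1 + a * c2 = 0 \<and> b * c2 + a * c3 = 0"
  proof (cases "c1 = 0 \<and> c2 = 0")
    case True
    then show ?thesis by (intro exI[of _ 0] exI[of _ 1]) simp
  next
    case False
    then show ?thesis
      using det by (intro exI[of _ "- c1"] exI[of _ c2]) (auto simp: algebra_simps power2_eq_square)
  qed
qed

definition code_poly :: "nat \<Rightarrow> (nat \<Rightarrow> 'a) \<Rightarrow> 'a::comm_ring_1 poly" where
  "code_poly k c = (\<Sum>i<k. monom (c i) (row_exp k i))"

lemma poly_code_poly: "poly (code_poly k c) x = (\<Sum>i<k. c i * x ^ row_exp k i)"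
  by (simp add: code_poly_def poly_sum poly_monom)

lemma inj_on_row_exp: "3 \<le> k \<Longrightarrow> inj_on (row_exp k) {..<k}"
  by (auto simp: inj_on_def row_exp_def split: if_splits)

lemma row_exp_image: "3 \<le> k \<Longrightarrow> row_exp k ` {..<k} = {..k + 1} - {k - 2, k - 1}"
proof (intro equalityI subsetI)
  fix m assume "3 \<le> k" and "m \<in> {..k + 1} - {k - 2, k - 1}"
  then have "m = row_exp k (if m \<le> k - 3 then m else m - 2)" "(if m \<le> k - 3 then m else m - 2) < k"
    by (auto simp: row_exp_def)
  then show "m \<in> row_exp k ` {..<k}"
    by blast
qed (auto simp: row_exp_def)

lemma coeff_code_poly: "coeff (code_poly k c) m = (\<Sum>i<k. if row_exp k i = m then c i else 0)"
  by (simp add: code_poly_def coeff_sum coeff_monom)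

lemma coeff_code_poly_row_exp:
  assumes "3 \<le> k" "i < k"
  shows "coeff (code_poly k c) (row_exp k i) = c i"
proof -
  have "(\<Sum>j<k. if row_exp k j = row_exp k i then c j else 0) = (\<Sum>j<k. if j = i then c j else 0)"
    using inj_on_row_exp[OF assms(1)] assms(2) by (intro sum.cong) (auto simp: inj_on_eq_iff)
  then show ?thesis
    using assms(2) by (simp add: coeff_code_poly)
qed

lemma coeff_code_poly_eq_0: "m \<notin> row_exp k ` {..<k} \<Longrightarrow> coeff (code_poly k c) m = 0"
  by (auto simp: coeff_code_poly intro!: sum.neutral)

lemma range_code_poly:
  assumes "3 \<le> k"
  shows "range (code_poly k :: _ \<Rightarrow> 'a::comm_ring_1 poly) =
           {f. degree f \<le> k + 1 \<and> coeff f (k - 2) = 0 \<and> coeff f (k - 1) = 0}"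
proof (intro equalityI subsetI)
  fix f assume "f \<in> range (code_poly k)"
  then obtain c where f: "f = code_poly k c" ..
  have "coeff f m = 0" if "m \<notin> {..k + 1} - {k - 2, k - 1}" for m
    using that by (simp add: f coeff_code_poly_eq_0 row_exp_image[OF assms])
  then show "f \<in> {f. degree f \<le> k + 1 \<and> coeff f (k - 2) = 0 \<and> coeff f (k - 1) = 0}"
    by (auto intro: degree_le)
next
  fix f :: "'a poly"
  assume f: "f \<in> {f. degree f \<le> k + 1 \<and> coeff f (k - 2) = 0 \<and> coeff f (k - 1) = 0}"
  have "f = code_poly k (\<lambda>i. coeff f (row_exp k i))"
  proof (rule poly_eqI)
    fix m
    show "coeff f m = coeff (code_poly k (\<lambda>i. coeff f (row_exp k i))) m"
    proof (cases "m \<in> row_exp k ` {..<k}")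
      case True
      then show ?thesis using assms by (auto simp: coeff_code_poly_row_exp)
    next
      case False
      then show ?thesis
        using assms f by (auto simp: coeff_code_poly_eq_0 row_exp_image coeff_eq_0)
    qed
  qed
  then show "f \<in> range (code_poly k)" by blast
qed

lemma vanishing_low_degree_iff:
  fixes \<beta> :: "nat \<Rightarrow> 'a::field"
  assumes inj: "inj_on \<beta> {..<k}"
  shows "(degree f \<le> k + 1 \<and> f \<noteq> 0 \<and> (\<forall>i<k. poly f (\<beta> i) = 0)) \<longleftrightarrow>
           (\<exists>a b. (a \<noteq> 0 \<or> b \<noteq> 0) \<and> f = root_poly k \<beta> * [:b, a:])"
proof
  assume f: "degree f \<le> k + 1 \<and> f \<noteq> 0 \<and> (\<forall>i<k. poly f (\<beta> i) = 0)"
  then obtain g where fg: "f = root_poly k \<beta> * g"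
    using root_poly_dvd_iff[OF inj] by (blast elim: dvdE)
  with f have "g \<noteq> 0" "degree g \<le> 1"
    by (auto simp: degree_mult_eq root_poly_nonzero degree_root_poly)
  moreover from \<open>degree g \<le> 1\<close> have "g = [:coeff g 0, coeff g 1:]"
    by (auto intro!: poly_eqI simp: coeff_pCons coeff_eq_0 split: nat.splits)
  ultimately show "\<exists>a b. (a \<noteq> 0 \<or> b \<noteq> 0) \<and> f = root_poly k \<beta> * [:b, a:]"
    using fg by (metis pCons_0_0)
next
  assume "\<exists>a b. (a \<noteq> 0 \<or> b \<noteq> 0) \<and> f = root_poly k \<beta> * [:b, a:]"
  then obtain a b where ab: "a \<noteq> 0 \<or> b \<noteq> 0" and f: "f = root_poly k \<beta> * [:b, a:]"
    by blast
  have "degree [:b, a:] \<le> 1"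
    by (simp add: degree_pCons_eq_if)
  then have "degree f \<le> k + 1"
    using degree_mult_le[of "root_poly k \<beta>" "[:b, a:]"] unfolding f degree_root_poly by linarith
  moreover have "f \<noteq> 0"
    using ab root_poly_nonzero[of k \<beta>] unfolding f by (metis mult_eq_0_iff pCons_eq_0_iff)
  ultimately show "degree f \<le> k + 1 \<and> f \<noteq> 0 \<and> (\<forall>i<k. poly f (\<beta> i) = 0)"
    by (simp add: f poly_root_poly_root)
qed

lemma ex_code_poly_vanishing_iff:
  fixes \<beta> :: "nat \<Rightarrow> 'a::field"
  assumes k: "3 \<le> k" and inj: "inj_on \<beta> {..<k}"
  shows "(\<exists>f\<in>range (code_poly k). f \<noteq> 0 \<and> (\<forall>i<k. poly f (\<beta> i) = 0)) \<longleftrightarrow>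
           complete_hom 2 k \<beta> ^ 2 - complete_hom 1 k \<beta> * complete_hom 3 k \<beta> = 0"
proof -
  let ?P = "root_poly k \<beta>"
  define c where "c j = coeff (rev_root_poly k \<beta>) j" for j
  have "(\<exists>f\<in>range (code_poly k). f \<noteq> 0 \<and> (\<forall>i<k. poly f (\<beta> i) = 0)) \<longleftrightarrow>
          (\<exists>f. (degree f \<le> k + 1 \<and> f \<noteq> 0 \<and> (\<forall>i<k. poly f (\<beta> i) = 0)) \<and>
               coeff f (k - 1) = 0 \<and> coeff f (k - 2) = 0)"
    by (auto simp: range_code_poly[OF k])
  also have "\<dots> \<longleftrightarrow> (\<exists>a b. (a \<noteq> 0 \<or> b \<noteq> 0) \<and>
                      coeff (?P * [:b, a:]) (k - 1) = 0 \<and> coeff (?P * [:b, a:]) (k - 2) = 0)"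
    by (simp only: vanishing_low_degree_iff[OF inj]) blast
  also have "\<dots> \<longleftrightarrow> (\<exists>a b. (a \<noteq> 0 \<or> b \<noteq> 0) \<and> b * c 1 + a * c 2 = 0 \<and> b * c 2 + a * c 3 = 0)"
    by (simp only: coeff_root_poly_mult_linear[OF k] c_def)
  also have "\<dots> \<longleftrightarrow> c 2 ^ 2 - c 1 * c 3 = 0"
    by (rule ex_nonzero_kernel_2x2_iff)
  also have "\<dots> \<longleftrightarrow> complete_hom 2 k \<beta> ^ 2 - complete_hom 1 k \<beta> * complete_hom 3 k \<beta> = 0"
    by (simp only: c_def rev_root_poly_hankel_det)
  finally show ?thesis .
qed

definition code_word :: "nat \<Rightarrow> nat \<Rightarrow> (nat \<Rightarrow> nat \<Rightarrow> 'a::field) \<Rightarrow> (nat \<Rightarrow> 'a) \<Rightarrow> nat \<Rightarrow> 'a" where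
  "code_word k n G c = (\<lambda>j. if j < n then (\<Sum>i<k. c i * G i j) else 0)"

lemma gen_code_eq_range: "gen_code k n G = range (code_word k n G)"
  by (auto simp: gen_code_def code_word_def)

lemma code_word_diff:
  "code_word k n G (\<lambda>i. c i - c' i) = (\<lambda>j. code_word k n G c j - code_word k n G c' j)"
  by (auto simp: code_word_def sum_subtractf left_diff_distrib)

lemma gen_code_diff:
  "v \<in> gen_code k n G \<Longrightarrow> w \<in> gen_code k n G \<Longrightarrow> (\<lambda>j. v j - w j) \<in> gen_code k n G"
  by (auto simp: gen_code_eq_range code_word_diff[symmetric])

lemma card_vanishing_beyond:
  "card {c :: nat \<Rightarrow> 'a::{finite,zero}. \<forall>i\<ge>m. c i = 0} = card (UNIV :: 'a set) ^ m"
proof -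
  have "bij_betw (\<lambda>c i. if i < m then c i else 0) (\<Pi>\<^sub>E i\<in>{..<m}. UNIV)
          {c :: nat \<Rightarrow> 'a. \<forall>i\<ge>m. c i = 0}"
    by (rule bij_betwI[where g = "\<lambda>c. restrict c {..<m}"])
      (auto simp: fun_eq_iff PiE_def extensional_def)
  then show ?thesis
    by (simp add: bij_betw_same_card[symmetric] card_PiE)
qed

lemma finite_vanishing_beyond: "finite {c :: nat \<Rightarrow> 'a::{finite,zero}. \<forall>i\<ge>m. c i = 0}"
proof -
  have "0 < card (UNIV :: 'a set)"
    by (simp add: finite_UNIV_card_ge_0)
  then show ?thesis
    using card_vanishing_beyond[where 'a = 'a, of m] by (intro card_ge_0_finite) simp
qed

lemma card_gen_code:
  fixes G :: "nat \<Rightarrow> nat \<Rightarrow> 'a::{finite,field}"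
  assumes indep: "\<And>c. code_word k n G c = (\<lambda>_. 0) \<Longrightarrow> \<forall>i<k. c i = 0"
  shows "card (gen_code k n G) = card (UNIV :: 'a set) ^ k"
proof -
  let ?V = "{c :: nat \<Rightarrow> 'a. \<forall>i\<ge>k. c i = 0}"
  have restrict: "code_word k n G c = code_word k n G (\<lambda>i. if i < k then c i else 0)" for c
    by (auto simp: code_word_def intro!: sum.cong)
  have "code_word k n G c \<in> code_word k n G ` ?V" for c
    by (rule image_eqI[where f = "code_word k n G", OF restrict[of c]]) auto
  then have "gen_code k n G = code_word k n G ` ?V"
    unfolding gen_code_eq_range by auto
  moreover have "inj_on (code_word k n G) ?V"
  proof (rule inj_onI)
    fix c c' assume V: "c \<in> ?V" "c' \<in> ?V" and eq: "code_word k n G c = code_word k n G c'"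
    have "code_word k n G (\<lambda>i. c i - c' i) = (\<lambda>_. 0)"
      using eq by (simp add: code_word_diff)
    then have low: "c i = c' i" if "i < k" for i
      using indep[of "\<lambda>i. c i - c' i"] that by simp
    show "c = c'"
    proof
      fix i
      show "c i = c' i"
        using V low by (cases "i < k") auto
    qed
  qed
  ultimately show ?thesis
    by (simp add: card_image card_vanishing_beyond)
qed

lemma card_UNIV_field_ge_2: "2 \<le> card (UNIV :: 'a::{finite,field} set)"
  using card_mono[of UNIV "{0 :: 'a, 1}"] by simp

lemma hweight_le: "hweight n v \<le> n"
  unfolding hweight_def by (rule card_mono[of "{..<n}", simplified]) auto

lemma hweight_add_card_zeros: "hweight n v + card {j. j < n \<and> v j = 0} = n"
proof -
  have "card {..<n} = card ({j. j < n \<and> v j \<noteq> 0} \<union> {j. j < n \<and> v j = 0})"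
    by (rule arg_cong[where f = card]) auto
  then show ?thesis
    unfolding hweight_def by (subst (asm) card_Un_disjoint) auto
qed

lemma gen_code_singleton_bound:
  fixes G :: "nat \<Rightarrow> nat \<Rightarrow> 'a::{finite,field}"
  assumes card: "card (gen_code k n G) = card (UNIV :: 'a set) ^ k" and "1 \<le> k"
  shows "\<exists>w\<in>gen_code k n G. w \<noteq> (\<lambda>_. 0) \<and> hweight n w \<le> n + 1 - k"
proof -
  let ?C = "gen_code k n G"
  define proj where "proj v = (\<lambda>j. if j < k - 1 then v j else 0)" for v :: "nat \<Rightarrow> 'a"
  have "proj ` ?C \<subseteq> {c. \<forall>i\<ge>k - 1. c i = 0}"
    by (auto simp: proj_def)
  then have "card (proj ` ?C) \<le> card {c :: nat \<Rightarrow> 'a. \<forall>i\<ge>k - 1. c i = 0}"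
    by (rule card_mono[OF finite_vanishing_beyond])
  also have "\<dots> = card (UNIV :: 'a set) ^ (k - 1)"
    by (rule card_vanishing_beyond)
  also have "\<dots> < card ?C"
    using card \<open>1 \<le> k\<close> card_UNIV_field_ge_2[where 'a = 'a] by (simp add: power_strict_increasing)
  finally have "\<not> inj_on proj ?C"
    using card_image by fastforce
  then obtain v v' where v: "v \<in> ?C" "v' \<in> ?C" "v \<noteq> v'" "proj v = proj v'"
    unfolding inj_on_def by blast
  let ?w = "\<lambda>j. v j - v' j"
  have "{j. j < n \<and> ?w j \<noteq> 0} \<subseteq> {k - 1..<n}"
  proof
    fix j assume "j \<in> {j. j < n \<and> ?w j \<noteq> 0}"
    then show "j \<in> {k - 1..<n}"
      using fun_cong[OF v(4), of j] by (cases "j < k - 1") (auto simp: proj_def)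
  qed
  then have "card {j. j < n \<and> ?w j \<noteq> 0} \<le> card {k - 1..<n}"
    by (rule card_mono[rotated]) simp
  then have "hweight n ?w \<le> n + 1 - k"
    using \<open>1 \<le> k\<close> by (simp add: hweight_def)
  moreover have "?w \<noteq> (\<lambda>_. 0)"
    using v(3) by (auto simp: fun_eq_iff)
  ultimately show ?thesis
    using gen_code_diff[OF v(1,2)] by blast
qed

lemma is_MDS_iff_min_dist:
  fixes C :: "(nat \<Rightarrow> 'a::{finite,field}) set"
  assumes "card C = card (UNIV :: 'a set) ^ k" and "\<exists>v\<in>C. v \<noteq> (\<lambda>_. 0)"
  shows "is_MDS n C \<longleftrightarrow> min_dist n C + k = n + 1"
proof -
  have "card (UNIV :: 'a set) ^ k = card (UNIV :: 'a set) ^ k' \<longleftrightarrow> k' = k" for k'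
    using card_UNIV_field_ge_2[where 'a = 'a] by (auto simp: power_inject_exp)
  then show ?thesis
    using assms unfolding is_MDS_def by auto
qed

lemma is_MDS_gen_code_iff:
  fixes G :: "nat \<Rightarrow> nat \<Rightarrow> 'a::{finite,field}"
  assumes card: "card (gen_code k n G) = card (UNIV :: 'a set) ^ k" and "1 \<le> k" "k \<le> n"
  shows "is_MDS n (gen_code k n G) \<longleftrightarrow>
           (\<forall>v\<in>gen_code k n G. v \<noteq> (\<lambda>_. 0) \<longrightarrow> card {j. j < n \<and> v j = 0} < k)"
proof -
  let ?C = "gen_code k n G"
  let ?W = "{hweight n v | v. v \<in> ?C \<and> v \<noteq> (\<lambda>_. 0)}"
  have fin: "finite ?W"
    by (rule finite_subset[of _ "{..n}"]) (auto simp: hweight_le)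
  obtain w where w: "w \<in> ?C" "w \<noteq> (\<lambda>_. 0)" "hweight n w \<le> n + 1 - k"
    using gen_code_singleton_bound[OF card \<open>1 \<le> k\<close>] by blast
  have few_zeros_iff: "card {j. j < n \<and> v j = 0} < k \<longleftrightarrow> n + 1 - k \<le> hweight n v" for v
    using hweight_add_card_zeros[of n v] \<open>k \<le> n\<close> by linarith
  have "is_MDS n ?C \<longleftrightarrow> min_dist n ?C + k = n + 1"
    using w by (intro is_MDS_iff_min_dist[OF card]) blast
  also have "\<dots> \<longleftrightarrow> min_dist n ?C = n + 1 - k"
    using \<open>k \<le> n\<close> by linarith
  also have "\<dots> \<longleftrightarrow> (\<forall>v\<in>?C. v \<noteq> (\<lambda>_. 0) \<longrightarrow> n + 1 - k \<le> hweight n v)"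
  proof
    assume md: "min_dist n ?C = n + 1 - k"
    show "\<forall>v\<in>?C. v \<noteq> (\<lambda>_. 0) \<longrightarrow> n + 1 - k \<le> hweight n v"
    proof (intro ballI impI)
      fix v assume "v \<in> ?C" "v \<noteq> (\<lambda>_. 0)"
      then have "hweight n v \<in> ?W"
        by blast
      then show "n + 1 - k \<le> hweight n v"
        using Min_le[OF fin] md unfolding min_dist_def by simp
    qed
  next
    assume "\<forall>v\<in>?C. v \<noteq> (\<lambda>_. 0) \<longrightarrow> n + 1 - k \<le> hweight n v"
    with w show "min_dist n ?C = n + 1 - k"
      unfolding min_dist_def by (intro Min_eqI[OF fin]) (auto intro!: exI[of _ w])
  qed
  finally show ?thesis
    by (simp only: few_zeros_iff)
qed

lemma card_Collect_less_iff_no_inj: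
  assumes "finite A"
  shows "card {x \<in> A. P x} < k \<longleftrightarrow>
           \<not> (\<exists>\<beta>. inj_on \<beta> {..<k} \<and> \<beta> ` {..<k} \<subseteq> A \<and> (\<forall>i<k. P (\<beta> i)))"
proof -
  have "(\<exists>\<beta>. inj_on \<beta> {..<k} \<and> \<beta> ` {..<k} \<subseteq> {x \<in> A. P x}) \<longleftrightarrow> k \<le> card {x \<in> A. P x}"
    using assms card_inj_on_le[of _ "{..<k}" "{x \<in> A. P x}"] card_le_inj[of "{..<k}" "{x \<in> A. P x}"]
    by auto
  moreover have "\<beta> ` {..<k} \<subseteq> {x \<in> A. P x} \<longleftrightarrow> \<beta> ` {..<k} \<subseteq> A \<and> (\<forall>i<k. P (\<beta> i))" for \<beta>
    by auto
  ultimately show ?thesis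
    by (simp add: not_le)
qed

lemma code_word_code_C:
  "code_word k n (\<lambda>i j. \<alpha> j ^ row_exp k i) c =
     (\<lambda>j. if j < n then poly (code_poly k c) (\<alpha> j) else 0)"
  unfolding code_word_def poly_code_poly ..

lemma code_poly_eq_0_if_roots:
  fixes \<alpha> :: "nat \<Rightarrow> 'a::field"
  assumes "3 \<le> k" "k + 2 \<le> n" "inj_on \<alpha> {..<n}" and roots: "\<forall>j<n. poly (code_poly k c) (\<alpha> j) = 0"
  shows "code_poly k c = 0"
proof (rule poly_eqI_degree)
  have "degree (code_poly k c) \<le> k + 1"
    using range_code_poly[OF assms(1)] by blast
  then show "degree (code_poly k c) < card (\<alpha> ` {..<n})" "degree 0 < card (\<alpha> ` {..<n})"
    using assms by (simp_all add: card_image)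
qed (use roots in auto)

lemma card_code_C:
  fixes \<alpha> :: "nat \<Rightarrow> 'a::{finite,field}"
  assumes "3 \<le> k" "k + 2 \<le> n" "inj_on \<alpha> {..<n}"
  shows "card (code_C k n \<alpha>) = card (UNIV :: 'a set) ^ k"
  unfolding code_C_def
proof (rule card_gen_code)
  fix c assume "code_word k n (\<lambda>i j. \<alpha> j ^ row_exp k i) c = (\<lambda>_. 0)"
  then have "\<forall>j<n. poly (code_poly k c) (\<alpha> j) = 0"
    by (metis code_word_code_C)
  then have "code_poly k c = 0"
    by (rule code_poly_eq_0_if_roots[OF assms])
  then show "\<forall>i<k. c i = 0"
    using coeff_code_poly_row_exp[OF assms(1)] by (metis coeff_0)
qed

lemma code_C_few_zeros_iff:
  fixes \<alpha> :: "nat \<Rightarrow> 'a::field"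
  assumes "3 \<le> k" "k + 2 \<le> n" "inj_on \<alpha> {..<n}"
  shows "(\<forall>v\<in>code_C k n \<alpha>. v \<noteq> (\<lambda>_. 0) \<longrightarrow> card {j. j < n \<and> v j = 0} < k) \<longleftrightarrow>
           (\<forall>f\<in>range (code_poly k). f \<noteq> 0 \<longrightarrow> card {x \<in> \<alpha> ` {..<n}. poly f x = 0} < k)"
proof -
  have "code_word k n (\<lambda>i j. \<alpha> j ^ row_exp k i) c \<noteq> (\<lambda>_. 0) \<longleftrightarrow> code_poly k c \<noteq> 0" for c
    using code_poly_eq_0_if_roots[OF assms, of c] by (auto simp: code_word_code_C fun_eq_iff)
  moreover have "card {j. j < n \<and> code_word k n (\<lambda>i j. \<alpha> j ^ row_exp k i) c j = 0} =
                   card {x \<in> \<alpha> ` {..<n}. poly (code_poly k c) x = 0}" for c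
  proof -
    have "{x \<in> \<alpha> ` {..<n}. poly (code_poly k c) x = 0} =
            \<alpha> ` {j. j < n \<and> poly (code_poly k c) (\<alpha> j) = 0}"
      by auto
    moreover have "inj_on \<alpha> {j. j < n \<and> poly (code_poly k c) (\<alpha> j) = 0}"
      using assms(3) by (rule inj_on_subset) auto
    moreover have "{j. j < n \<and> code_word k n (\<lambda>i j. \<alpha> j ^ row_exp k i) c j = 0} =
                     {j. j < n \<and> poly (code_poly k c) (\<alpha> j) = 0}"
      by (auto simp: code_word_code_C)
    ultimately show ?thesis
      by (simp add: card_image)
  qed
  ultimately show ?thesis
    unfolding code_C_def gen_code_eq_range by auto
qed

theorem theorem3p4:
  fixes \<alpha> :: "nat \<Rightarrow> 'a::{finite,field}" and n k :: nat
  assumes "3 \<le> k" and "k + 2 \<le> n" and "n \<le> card (UNIV :: 'a set)"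
    and "inj_on \<alpha> {..<n}"
  shows "is_MDS n (code_C k n \<alpha>) \<longleftrightarrow>
    (\<forall>\<beta>::nat \<Rightarrow> 'a. inj_on \<beta> {..<k} \<and> \<beta> ` {..<k} \<subseteq> \<alpha> ` {..<n} \<longrightarrow>
       (complete_hom 2 k \<beta>)^2 - complete_hom 1 k \<beta> * complete_hom 3 k \<beta> \<noteq> 0)"
proof -
  have "is_MDS n (code_C k n \<alpha>) \<longleftrightarrow>
          (\<forall>v\<in>code_C k n \<alpha>. v \<noteq> (\<lambda>_. 0) \<longrightarrow> card {j. j < n \<and> v j = 0} < k)"
    unfolding code_C_def
    by (rule is_MDS_gen_code_iff)
      (use card_code_C[OF assms(1,2,4)] assms(1,2) in \<open>simp_all add: code_C_def\<close>)
  also have "\<dots> \<longleftrightarrow> (\<forall>f\<in>range (code_poly k). f \<noteq> 0 \<longrightarrow> card {x \<in> \<alpha> ` {..<n}. poly f x = 0} < k)"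
    by (rule code_C_few_zeros_iff[OF assms(1,2,4)])
  also have "\<dots> \<longleftrightarrow> (\<forall>\<beta>. inj_on \<beta> {..<k} \<and> \<beta> ` {..<k} \<subseteq> \<alpha> ` {..<n} \<longrightarrow>
                    \<not> (\<exists>f\<in>range (code_poly k). f \<noteq> 0 \<and> (\<forall>i<k. poly f (\<beta> i) = 0)))"
    by (simp only: card_Collect_less_iff_no_inj[OF finite_imageI[OF finite_lessThan]]) blast
  also have "\<dots> \<longleftrightarrow> (\<forall>\<beta>. inj_on \<beta> {..<k} \<and> \<beta> ` {..<k} \<subseteq> \<alpha> ` {..<n} \<longrightarrow>
                    complete_hom 2 k \<beta> ^ 2 - complete_hom 1 k \<beta> * complete_hom 3 k \<beta> \<noteq> 0)"
    by (simp only: ex_code_poly_vanishing_iff[OF assms(1)] cong: imp_cong)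
  finally show ?thesis .
qed

end
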